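(* Let $g:\mathbb{R}^n\to\mathbb{R}^n$ be convex, order-preserving and additively homogeneous, and assume $g$ admits at least one harmonic vector. Let $C$ be the set of critical nodes of $g$ and $N=[n]\setminus C$. Let $u\in\mathbb{R}^n$ be super-harmonic for $g$ ($g(u)\le u$). Then each of the following conditions defines uniquely a vector $v\in\mathbb{R}^n$, and all four define the same vector: (i) $v=\lim_{k\to\infty} g^k(u)$ (the limit exists); (ii) $v$ is harmonic for $g$ and $v_C=u_C$; (iii) $v_C=u_C$ and $v_N$ is a fixed point of the map $h:\mathbb{R}^N\to\mathbb{R}^N$, $h(y)=\big(g(\imath_N(y,u_C))\big)_N$; (iv) $v$ is the smallest super-harmonic vector of $g$ that dominates $u$ on $C$ (i.e. with $v_C\ge u_C$).
   Context: $[n]=\{1,\dots,n\}$, $g^k$ is the $k$-th iterate of $g$. A map $g:\mathbb{R}^n\to\mathbb{R}^n$ is order-preserving if $x\le y$ (coordinatewise) implies $g(x)\le g(y)$; additively homogeneous if $g(\lambda+x)=\lambda+g(x)$ for all $\lambda\in\mathbb{R}$, $x\in\mathbb{R}^n$; convex if each coordinate $g_i$ is convex. A vector $u$ is harmonic for $g$ if $g(u)=u$ and super-harmonic if $g(u)\le u$. The subdifferential of $g$ at $u$ is $\partial g(u)=\{M\in\mathbb{R}^{n\times n}: g(x)-g(u)\ge M(x-u)\ \forall x\}$ (its elements are stochastic matrices here). For $I\subseteq[n]$, $x_I$ denotes the restriction of $x$ to $I$, $M_{IJ}$ the $I\times J$ submatrix, and $\imath_N(y,z)$ the vector of $\mathbb{R}^n$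 with $N$-coordinates $y$ and $C$-coordinates $z$. A recurrence class of $M$ is a final communication class $F$ of $M$ (strongly connected class of the graph of nonzero entries with no arc leaving it) with $M_{FF}$ stochastic. A node is critical for $g$ if it belongs to a recurrence class of some $M\in\partial g(w)$, where $w$ is a harmonic vector of $g$; this set does not depend on the choice of $w$. *)

theory Defs
  imports "HOL-Analysis.Analysis"
begin

text \<open>Vectors of R^n are modelled as real^'n (index type 'n of class finite);
  the order on real^'n is the coordinatewise order.\<close>

definition order_preserving :: "(real^'n \<Rightarrow> real^'n) \<Rightarrow> bool" where
  "order_preserving g \<longleftrightarrow> (\<forall>x y. x \<le> y \<longrightarrow> g x \<le> g y)"

definition additively_homogeneous :: "(real^'n \<Rightarrow> real^'n) \<Rightarrow> bool" where
  "additively_homogeneous g \<longleftrightarrow>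
     (\<forall>(c::real) x. g ((\<chi> i. c) + x) = (\<chi> i. c) + g x)"

definition convex_map :: "(real^'n \<Rightarrow> real^'n) \<Rightarrow> bool" where
  "convex_map g \<longleftrightarrow> (\<forall>i. convex_on UNIV (\<lambda>x. g x $ i))"

definition harmonic :: "(real^'n \<Rightarrow> real^'n) \<Rightarrow> real^'n \<Rightarrow> bool" where
  "harmonic g u \<longleftrightarrow> g u = u"

definition super_harmonic :: "(real^'n \<Rightarrow> real^'n) \<Rightarrow> real^'n \<Rightarrow> bool" where
  "super_harmonic g u \<longleftrightarrow> g u \<le> u"

definition subdifferential :: "(real^'n \<Rightarrow> real^'n) \<Rightarrow> real^'n \<Rightarrow> (real^'n^'n) set" where
  "subdifferential g u = {M. \<forall>x. M *v (x - u) \<le> g x - g u}"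

definition mat_graph :: "real^'n^'n \<Rightarrow> ('n \<times> 'n) set" where
  "mat_graph M = {(i, j). M $ i $ j \<noteq> 0}"

text \<open>A recurrence class: a final communication class F of M with M_FF stochastic.\<close>
definition recurrence_class :: "real^'n^'n \<Rightarrow> 'n set \<Rightarrow> bool" where
  "recurrence_class M F \<longleftrightarrow>
     (\<exists>i. F = {j. (i, j) \<in> (mat_graph M)\<^sup>* \<and> (j, i) \<in> (mat_graph M)\<^sup>*}) \<and>
     (\<forall>i\<in>F. \<forall>j. M $ i $ j \<noteq> 0 \<longrightarrow> j \<in> F) \<and>
     (\<forall>i\<in>F. \<forall>j\<in>F. 0 \<le> M $ i $ j) \<and>
     (\<forall>i\<in>F. (\<Sum>j\<in>F. M $ i $ j) = 1)"

definition critical_nodes :: "(real^'n \<Rightarrow> real^'n) \<Rightarrow> 'n set" where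
  "critical_nodes g = {i. \<exists>w. harmonic g w \<and>
      (\<exists>M \<in> subdifferential g w. \<exists>F. recurrence_class M F \<and> i \<in> F)}"

end

theory Submission
  imports Defs
begin

text \<open>Every subgradient of g is a stochastic matrix, so differences between harmonic and
  super- or sub-harmonic vectors obey a discrete maximum principle: the set where such a
  difference attains its extremum is closed in the graph of a subgradient at a harmonic
  vector, hence contains a recurrence class and therefore a critical node. Thus g fixes the
  critical coordinates of a super-harmonic vector, and a harmonic vector (indeed any vector
  fixed by g off the critical nodes) is determined by its critical coordinates. The orbit
  g^k(u) of a super-harmonic u decreases, is bounded below by a translate of a harmonic
  vector and keeps the critical coordinates of u, so it converges, by continuity of the
  convex map g, to a harmonic vector v with v_C = u_C; the comparison principles identify v
  with the vectors described in (ii)-(iv).\<close>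

lemma convex_on_subgradient:
  fixes f :: "'a::euclidean_space \<Rightarrow> real"
  assumes "convex_on UNIV f"
  obtains r where "\<And>x. f p + r \<bullet> (x - p) \<le> f x"
proof -
  have "convex (epigraph UNIV f)" using assms by (rule convex_epigraphI)
  moreover have "convex ({p} \<times> {..<f p})"
    by (intro convex_Times convex_singleton convex_real_interval)
  moreover have "(p, f p) \<in> epigraph UNIV f" and "(p, f p - 1) \<in> {p} \<times> {..<f p}"
    by (auto simp: mem_epigraph)
  moreover have "epigraph UNIV f \<inter> ({p} \<times> {..<f p}) = {}"
    by (auto simp: mem_epigraph)
  ultimately obtain a b where "a \<noteq> 0"
    and above: "\<forall>z\<in>epigraph UNIV f. a \<bullet> z \<le> b"
    and below: "\<forall>z\<in>{p} \<times> {..<f p}. b \<le> a \<bullet> z"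
    using separating_hyperplane_sets by (metis empty_iff)
  obtain a1 a2 where a: "a = (a1, a2)" by fastforce
  have epi: "a1 \<bullet> x + a2 * s \<le> b" if "f x \<le> s" for x s
    using above[rule_format, of "(x, s)"] that by (simp add: a mem_epigraph)
  have strict: "b \<le> a1 \<bullet> p + a2 * s" if "s < f p" for s
    using below[rule_format, of "(p, s)"] that by (simp add: a)
  have "a2 \<le> 0"
    using epi[of p "f p"] strict[of "f p - 1"] by (simp add: algebra_simps)
  moreover have "a2 \<noteq> 0"
  proof
    assume "a2 = 0"
    then have "a1 \<bullet> (p + a1) \<le> a1 \<bullet> p"
      using epi[of "p + a1" "f (p + a1)"] strict[of "f p - 1"] by simp
    then have "a1 = 0" by (simp add: inner_add_right not_less[symmetric])
    with \<open>a2 = 0\<close> \<open>a \<noteq> 0\<close> show False by (simp add: a zero_prod_def)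
  qed
  ultimately have "a2 < 0" by simp
  have "f p + (- (1 / a2)) *\<^sub>R a1 \<bullet> (x - p) \<le> f x" for x
  proof -
    have "s \<le> f x + (a1 \<bullet> (x - p)) / a2" if "s < f p" for s
    proof -
      have "a1 \<bullet> (x - p) \<le> a2 * (s - f x)"
        using epi[of x "f x"] strict[OF that] by (simp add: inner_diff_right algebra_simps)
      then have "s - f x \<le> (a1 \<bullet> (x - p)) / a2"
        using \<open>a2 < 0\<close> by (simp add: neg_le_divide_eq mult.commute)
      then show ?thesis by simp
    qed
    then have "f p \<le> f x + (a1 \<bullet> (x - p)) / a2" by (rule dense_le)
    then show ?thesis by simp
  qed
  then show ?thesis by (rule that)
qed

definition stochastic_matrix :: "real^'n^'n \<Rightarrow> bool" where
  "stochastic_matrix M \<longleftrightarrow> (\<forall>i j. 0 \<le> M$i$j) \<and> (\<forall>i. (\<Sum>j\<in>UNIV. M$i$j) = 1)"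

lemma stochastic_row_average_ge:
  fixes M :: "real^'n^'n"
  assumes "stochastic_matrix M" and lower: "\<And>j. M$i$j \<noteq> 0 \<Longrightarrow> m \<le> d$j"
  shows "m \<le> M$i \<bullet> d"
proof -
  have "m = (\<Sum>j\<in>UNIV. M$i$j * m)"
    using assms(1) by (simp add: stochastic_matrix_def sum_distrib_right[symmetric])
  also have "\<dots> \<le> (\<Sum>j\<in>UNIV. M$i$j * d$j)"
    using assms(1) lower
    by (intro sum_mono) (metis mult_eq_0_iff mult_left_mono order_refl stochastic_matrix_def)
  finally show ?thesis by (simp add: inner_vec_def)
qed

lemma stochastic_row_average_le_lower_bound_imp_eq:
  fixes M :: "real^'n^'n"
  assumes "stochastic_matrix M" and lower: "\<And>j. M$i$j \<noteq> 0 \<Longrightarrow> m \<le> d$j"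
    and "M$i \<bullet> d \<le> m" and "M$i$j \<noteq> 0"
  shows "d$j = m"
proof -
  have nonneg: "\<forall>k\<in>UNIV. 0 \<le> M$i$k * (d$k - m)"
    using assms(1) lower
    by (metis diff_ge_0_iff_ge mult_eq_0_iff mult_nonneg_nonneg order_refl stochastic_matrix_def)
  have "(\<Sum>k\<in>UNIV. M$i$k * (d$k - m)) = M$i \<bullet> d - m"
    using assms(1)
    by (simp add: stochastic_matrix_def inner_vec_def right_diff_distrib sum_subtractf
        sum_distrib_right[symmetric])
  also have "\<dots> \<le> 0" using assms(3) by simp
  finally have "\<forall>k\<in>UNIV. M$i$k * (d$k - m) = 0"
    using nonneg sum_nonneg[of UNIV "\<lambda>k. M$i$k * (d$k - m)"] sum_nonneg_eq_0_iff
    by (metis (no_types, lifting) antisym finite)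
  then show ?thesis using assms(4) by auto
qed

lemma closed_set_mat_graph_rtrancl:
  assumes S_closed: "\<And>i j. i \<in> S \<Longrightarrow> M$i$j \<noteq> 0 \<Longrightarrow> j \<in> S"
    and "(i, j) \<in> (mat_graph M)\<^sup>*" and "i \<in> S"
  shows "j \<in> S"
  using assms(2,3) by (induction rule: rtrancl_induct) (auto simp: mat_graph_def S_closed)

text \<open>A reachable set of minimal cardinality is strongly connected, hence a final class.\<close>

lemma closed_set_contains_recurrence_class:
  fixes M :: "real^'n^'n"
  assumes "stochastic_matrix M" and "i \<in> S"
    and S_closed: "\<And>i j. i \<in> S \<Longrightarrow> M$i$j \<noteq> 0 \<Longrightarrow> j \<in> S"
  obtains F where "recurrence_class M F" and "F \<subseteq> S" and "F \<noteq> {}"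
proof -
  let ?G = "mat_graph M"
  define R where "R i = {j. (i, j) \<in> ?G\<^sup>*}" for i
  have R_subset: "R i \<subseteq> S" if "i \<in> S" for i
    using closed_set_mat_graph_rtrancl[OF S_closed _ that] by (auto simp: R_def)
  obtain i0 where "i0 \<in> S" and minimal: "\<And>i. i \<in> S \<Longrightarrow> card (R i0) \<le> card (R i)"
    using ex_has_least_nat[of "\<lambda>i. i \<in> S" i "\<lambda>i. card (R i)"] assms(2) by blast
  define F where "F = {j. (i0, j) \<in> ?G\<^sup>* \<and> (j, i0) \<in> ?G\<^sup>*}"
  have F_eq: "F = R i0"
  proof -
    have "(j, i0) \<in> ?G\<^sup>*" if "j \<in> R i0" for j
    proof -
      have "R j \<subseteq> R i0" using that by (auto simp: R_def)
      moreover have "card (R i0) \<le> card (R j)" using minimal R_subset \<open>i0 \<in> S\<close> that by blast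
      ultimately have "R j = R i0" by (simp add: card_seteq)
      then show ?thesis by (auto simp: R_def)
    qed
    then show ?thesis by (auto simp: F_def R_def)
  qed
  have F_closed: "\<forall>i\<in>F. \<forall>j. M$i$j \<noteq> 0 \<longrightarrow> j \<in> F"
    by (auto simp: F_eq R_def mat_graph_def intro: rtrancl_into_rtrancl)
  have "(\<Sum>j\<in>F. M$i$j) = 1" if "i \<in> F" for i
  proof -
    have "(\<Sum>j\<in>F. M$i$j) = (\<Sum>j\<in>UNIV. M$i$j)"
      using F_closed that by (intro sum.mono_neutral_left) auto
    then show ?thesis using assms(1) by (simp add: stochastic_matrix_def)
  qed
  then have "recurrence_class M F"
    using F_closed assms(1) unfolding recurrence_class_def stochastic_matrix_def F_def by blast
  moreover have "F \<subseteq> S" using F_eq R_subset \<open>i0 \<in> S\<close> by blast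
  moreover have "i0 \<in> F" by (simp add: F_def)
  ultimately show ?thesis using that by blast
qed

lemma vec_decreasing_bounded_convergent:
  fixes X :: "nat \<Rightarrow> real^'n"
  assumes "\<And>k. X (Suc k) \<le> X k" and "\<And>k. b \<le> X k"
  obtains v where "X \<longlonglongrightarrow> v"
proof -
  have "\<exists>L. (\<lambda>k. X k $ i) \<longlonglongrightarrow> L" for i
  proof -
    have "decseq (\<lambda>k. X k $ i)"
      using assms(1) by (intro decseq_SucI) (simp add: less_eq_vec_def)
    moreover have "\<forall>k. b $ i \<le> X k $ i"
      using assms(2) by (simp add: less_eq_vec_def)
    ultimately show ?thesis by (metis decseq_convergent)
  qed
  then obtain L where "\<And>i. (\<lambda>k. X k $ i) \<longlonglongrightarrow> L i" by metis
  then have "X \<longlonglongrightarrow> (\<chi> i. L i)" by (intro vec_tendstoI) simp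
  then show ?thesis by (rule that)
qed

lemma limit_of_iterates_is_fixed_point:
  fixes f :: "'a::t2_space \<Rightarrow> 'a"
  assumes "continuous_on UNIV f" and "(\<lambda>k. (f ^^ k) x) \<longlonglongrightarrow> v"
  shows "f v = v"
proof (rule LIMSEQ_unique)
  show "(\<lambda>k. f ((f ^^ k) x)) \<longlonglongrightarrow> f v"
    using assms by (intro continuous_on_tendsto_compose[of UNIV f]) auto
  show "(\<lambda>k. f ((f ^^ k) x)) \<longlonglongrightarrow> v"
    using LIMSEQ_Suc[OF assms(2)] by simp
qed

lemma subdifferential_iff_rows:
  "M \<in> subdifferential g u \<longleftrightarrow> (\<forall>i x. M$i \<bullet> (x - u) \<le> g x $ i - g u $ i)"
  by (auto simp: subdifferential_def less_eq_vec_def matrix_vector_mul_component)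

locale convex_topical =
  fixes g :: "real^'n \<Rightarrow> real^'n"
  assumes convex: "convex_map g"
    and order_preserving: "order_preserving g"
    and homogeneous: "additively_homogeneous g"
begin

lemma mono: "x \<le> y \<Longrightarrow> g x \<le> g y"
  using order_preserving by (simp add: order_preserving_def)

lemma add_const: "g ((\<chi> i. c) + x) = (\<chi> i. c) + g x"
  using homogeneous by (simp add: additively_homogeneous_def)

lemma continuous: "continuous_on UNIV g"
proof -
  have "continuous_on UNIV (\<lambda>x. g x $ i)" for i
    using convex by (intro convex_on_continuous) (auto simp: convex_map_def)
  then have "continuous_on UNIV (\<lambda>x. \<chi> i. g x $ i)" by (rule continuous_on_vec_lambda)
  then show ?thesis by simp
qed

lemma subdifferential_nonempty: "subdifferential g p \<noteq> {}"
proof -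
  have "\<exists>r. \<forall>x. g p $ i + r \<bullet> (x - p) \<le> g x $ i" for i
    using convex unfolding convex_map_def by (metis convex_on_subgradient)
  then obtain r where "\<And>i x. g p $ i + r i \<bullet> (x - p) \<le> g x $ i" by metis
  then have "(\<chi> i. r i) \<in> subdifferential g p"
    by (simp add: subdifferential_iff_rows algebra_simps)
  then show ?thesis by blast
qed

lemma subdifferential_stochastic:
  assumes "M \<in> subdifferential g p"
  shows "stochastic_matrix M"
  unfolding stochastic_matrix_def
proof (intro conjI allI)
  have row: "M$i \<bullet> (x - p) \<le> g x $ i - g p $ i" for i x
    using assms by (simp add: subdifferential_iff_rows)
  fix i j
  define x where "x = p - axis j 1"
  have "g x $ i \<le> g p $ i"
    using mono[of x p] by (simp add: x_def less_eq_vec_def axis_def)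
  moreover have "M$i \<bullet> (x - p) = - M$i$j"
    by (simp add: x_def inner_axis)
  ultimately show "0 \<le> M$i$j" using row[of i x] by simp
  have "(\<Sum>k\<in>UNIV. M$i$k) * c \<le> c" for c
    using row[of i "(\<chi> k. c) + p"]
    by (simp add: add_const inner_vec_def sum_distrib_right)
  from this[of 1] this[of "-1"] show "(\<Sum>k\<in>UNIV. M$i$k) = 1" by simp
qed

lemma subgradient_row_at_larger_point:
  assumes "M \<in> subdifferential g a" and "a \<le> y" and "g y $ i \<le> g a $ i"
  shows "M$i \<bullet> (x - y) \<le> g x $ i - g y $ i"
proof -
  have "M$i \<bullet> (a - y) \<le> 0"
    using assms(1,2) subdifferential_stochastic[OF assms(1)]
    by (auto simp: inner_vec_def stochastic_matrix_def less_eq_vec_def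
        intro!: sum_nonpos mult_nonneg_nonpos)
  moreover have "M$i \<bullet> (x - a) \<le> g x $ i - g a $ i"
    using assms(1) by (simp add: subdifferential_iff_rows)
  ultimately show ?thesis using assms(3) by (simp add: inner_diff_right)
qed

lemma closed_set_meets_critical_nodes:
  assumes "g w = w" and "M \<in> subdifferential g w" and "i \<in> S"
    and "\<And>i j. i \<in> S \<Longrightarrow> M$i$j \<noteq> 0 \<Longrightarrow> j \<in> S"
  shows "\<exists>k\<in>S. k \<in> critical_nodes g"
proof -
  obtain F where "recurrence_class M F" "F \<subseteq> S" "F \<noteq> {}"
    using closed_set_contains_recurrence_class subdifferential_stochastic assms(2-4) by metis
  then show ?thesis
    using assms(1,2) unfolding critical_nodes_def harmonic_def by blast
qed

text \<open>On a recurrence class F of some M \<in> \<partial>g(w), w harmonic, the inequality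
  M(u - w) \<le> g(u) - w \<le> u - w forces u - w to be constant on F, and then the middle
  inequality is an equality.\<close>

lemma super_harmonic_fixed_on_critical_nodes:
  assumes "g u \<le> u" and "i \<in> critical_nodes g"
  shows "g u $ i = u $ i"
proof -
  obtain w M F where "g w = w" and M: "M \<in> subdifferential g w"
    and F: "recurrence_class M F" and "i \<in> F"
    using assms(2) unfolding critical_nodes_def harmonic_def by blast
  note stochastic = subdifferential_stochastic[OF M]
  obtain i0 where F_eq: "F = {j. (i0, j) \<in> (mat_graph M)\<^sup>* \<and> (j, i0) \<in> (mat_graph M)\<^sup>*}"
    using F unfolding recurrence_class_def by blast
  have F_closed: "\<And>k j. k \<in> F \<Longrightarrow> M$k$j \<noteq> 0 \<Longrightarrow> j \<in> F"
    using F unfolding recurrence_class_def by blast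
  define d where "d = u - w"
  have sandwich: "M$k \<bullet> d \<le> g u $ k - w $ k" "g u $ k - w $ k \<le> d $ k" for k
    using M \<open>g w = w\<close> assms(1)
    by (auto simp: subdifferential_iff_rows d_def less_eq_vec_def)
  define m where "m = Min ((\<lambda>j. d$j) ` F)"
  have m_le: "\<And>j. j \<in> F \<Longrightarrow> m \<le> d$j" by (simp add: m_def)
  have "m \<in> (\<lambda>j. d$j) ` F"
    unfolding m_def using \<open>i \<in> F\<close> by (intro Min_in) auto
  then obtain j0 where "j0 \<in> F" "d$j0 = m" by auto
  define A where "A = {k \<in> F. d$k = m}"
  have A_closed: "j \<in> A" if "k \<in> A" "M$k$j \<noteq> 0" for k j
  proof -
    have "d$j = m"
    proof (rule stochastic_row_average_le_lower_bound_imp_eq[OF stochastic])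
      show "\<And>l. M$k$l \<noteq> 0 \<Longrightarrow> m \<le> d$l" using F_closed m_le that(1) by (auto simp: A_def)
      show "M$k \<bullet> d \<le> m" using sandwich[of k] that(1) by (auto simp: A_def)
    qed (rule that(2))
    then show ?thesis using F_closed that by (auto simp: A_def)
  qed
  have "(j0, i) \<in> (mat_graph M)\<^sup>*"
    using \<open>j0 \<in> F\<close> \<open>i \<in> F\<close> unfolding F_eq by (auto intro: rtrancl_trans)
  moreover have "j0 \<in> A" using \<open>j0 \<in> F\<close> \<open>d$j0 = m\<close> by (simp add: A_def)
  ultimately have "i \<in> A" by (meson closed_set_mat_graph_rtrancl A_closed)
  moreover have "m \<le> M$i \<bullet> d"
    using stochastic_row_average_ge[OF stochastic] F_closed m_le \<open>i \<in> F\<close> by blast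
  ultimately have "g u $ i - w $ i = d $ i"
    using sandwich[of i] unfolding A_def by simp
  then show ?thesis by (simp add: d_def)
qed

lemma harmonic_le_if_super_harmonic_off_critical:
  assumes "g a = a" and super: "\<And>i. i \<notin> critical_nodes g \<Longrightarrow> g b $ i \<le> b $ i"
    and le_critical: "\<And>i. i \<in> critical_nodes g \<Longrightarrow> a $ i \<le> b $ i"
  shows "a \<le> b"
proof (rule ccontr)
  assume "\<not> a \<le> b"
  define e where "e = b - a"
  define m where "m = Min (range (\<lambda>i. e$i))"
  have m_le: "\<And>j. m \<le> e$j" by (simp add: m_def)
  have "m \<in> range (\<lambda>i. e$i)" unfolding m_def by (intro Min_in) auto
  then obtain i1 where "e$i1 = m" by auto
  have "m < 0"
  proof -
    obtain j where "b$j < a$j" using \<open>\<not> a \<le> b\<close> by (auto simp: less_eq_vec_def not_le)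
    then show ?thesis using m_le[of j] by (simp add: e_def)
  qed
  define S where "S = {i. e$i = m}"
  have S_off_critical: "i \<notin> critical_nodes g" if "i \<in> S" for i
    using le_critical[of i] that \<open>m < 0\<close> by (force simp: S_def e_def)
  obtain M where M: "M \<in> subdifferential g a" using subdifferential_nonempty by blast
  have "j \<in> S" if "i \<in> S" and "M$i$j \<noteq> 0" for i j
  proof -
    have "M$i \<bullet> e \<le> g b $ i - g a $ i"
      using M by (simp add: subdifferential_iff_rows e_def)
    also have "\<dots> \<le> m"
      using super[OF S_off_critical[OF that(1)]] \<open>g a = a\<close> that(1) by (simp add: S_def e_def)
    finally have "e$j = m"
      using stochastic_row_average_le_lower_bound_imp_eq[OF subdifferential_stochastic[OF M]]
        m_le that(2) by blast
    then show ?thesis by (simp add: S_def)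
  qed
  then obtain k where "k \<in> S" "k \<in> critical_nodes g"
    using closed_set_meets_critical_nodes[OF \<open>g a = a\<close> M, of i1 S] \<open>e$i1 = m\<close>
    by (auto simp: S_def)
  then show False using S_off_critical by blast
qed

text \<open>Dual to the previous lemma, except that a subgradient at the harmonic vector b + t
  is needed; it is spliced from subgradients at a (on the rows where a = b + t) and at b + t.\<close>

lemma le_harmonic_if_sub_harmonic_off_critical:
  assumes "g b = b" and sub: "\<And>i. i \<notin> critical_nodes g \<Longrightarrow> a $ i \<le> g a $ i"
    and le_critical: "\<And>i. i \<in> critical_nodes g \<Longrightarrow> a $ i \<le> b $ i"
  shows "a \<le> b"
proof (rule ccontr)
  assume "\<not> a \<le> b"
  define d where "d = a - b"
  define t where "t = Max (range (\<lambda>i. d$i))"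
  have le_t: "\<And>j. d$j \<le> t" by (simp add: t_def)
  have "t \<in> range (\<lambda>i. d$i)" unfolding t_def by (intro Max_in) auto
  then obtain i1 where "d$i1 = t" by auto
  have "0 < t"
  proof -
    obtain j where "b$j < a$j" using \<open>\<not> a \<le> b\<close> by (auto simp: less_eq_vec_def not_le)
    then show ?thesis using le_t[of j] by (simp add: d_def)
  qed
  define S where "S = {i. d$i = t}"
  have S_off_critical: "i \<notin> critical_nodes g" if "i \<in> S" for i
    using le_critical[of i] that \<open>0 < t\<close> by (force simp: S_def d_def)
  obtain Q where Q: "Q \<in> subdifferential g a" using subdifferential_nonempty by blast
  have lower: "- t \<le> (b - a)$j" for j
    using le_t[of j] by (simp add: d_def)
  have Q_closed: "j \<in> S" if "i \<in> S" and "Q$i$j \<noteq> 0" for i j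
  proof -
    have "Q$i \<bullet> (b - a) \<le> g b $ i - g a $ i"
      using Q by (simp add: subdifferential_iff_rows)
    also have "\<dots> \<le> - t"
      using sub[OF S_off_critical[OF that(1)]] \<open>g b = b\<close> that(1) by (simp add: S_def d_def)
    finally have "(b - a)$j = - t"
      by (rule stochastic_row_average_le_lower_bound_imp_eq[OF subdifferential_stochastic[OF Q],
            rotated]) (use lower that(2) in auto)
    then show ?thesis by (simp add: S_def d_def)
  qed
  define y where "y = (\<chi> i. t) + b"
  have "g y = y" by (simp add: y_def add_const \<open>g b = b\<close>)
  obtain P where P: "P \<in> subdifferential g y" using subdifferential_nonempty by blast
  define M where "M = (\<chi> i. if i \<in> S then Q$i else P$i)"
  have "M \<in> subdifferential g y"
    unfolding subdifferential_iff_rows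
  proof (intro allI)
    fix i x
    show "M$i \<bullet> (x - y) \<le> g x $ i - g y $ i"
    proof (cases "i \<in> S")
      case True
      have "a \<le> y" using le_t by (simp add: y_def d_def less_eq_vec_def algebra_simps)
      moreover have "g y $ i \<le> g a $ i"
        using \<open>g y = y\<close> sub[OF S_off_critical[OF True]] True by (simp add: y_def S_def d_def)
      ultimately show ?thesis
        using subgradient_row_at_larger_point[OF Q] True by (simp add: M_def)
    next
      case False
      then show ?thesis using P by (simp add: M_def subdifferential_iff_rows)
    qed
  qed
  moreover have "j \<in> S" if "i \<in> S" and "M$i$j \<noteq> 0" for i j
    using Q_closed that by (simp add: M_def)
  ultimately obtain k where "k \<in> S" "k \<in> critical_nodes g"
    using closed_set_meets_critical_nodes[OF \<open>g y = y\<close>, of M i1 S] \<open>d$i1 = t\<close>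
    by (auto simp: S_def)
  then show False using S_off_critical by blast
qed

lemma eq_harmonic_if_fixed_off_critical:
  assumes "g v = v" and "\<And>i. i \<notin> critical_nodes g \<Longrightarrow> g w $ i = w $ i"
    and "\<And>i. i \<in> critical_nodes g \<Longrightarrow> w $ i = v $ i"
  shows "w = v"
  using harmonic_le_if_super_harmonic_off_critical[of v w]
    le_harmonic_if_sub_harmonic_off_critical[of v w] assms
  by (simp add: order_antisym)

lemma iterates_mono: "x \<le> y \<Longrightarrow> (g ^^ k) x \<le> (g ^^ k) y"
  by (induction k) (auto intro: mono)

lemma super_harmonic_orbit_converges:
  assumes "g w = w" and "g u \<le> u"
  obtains v where "(\<lambda>k. (g ^^ k) u) \<longlonglongrightarrow> v" and "g v = v"
    and "\<And>i. i \<in> critical_nodes g \<Longrightarrow> v $ i = u $ i"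
proof -
  have decreasing: "(g ^^ Suc k) u \<le> (g ^^ k) u" for k
    using iterates_mono[OF assms(2)] by (simp add: funpow_swap1)
  define lb where "lb = (\<chi> i. - norm (w - u)) + w"
  have "lb \<le> u"
    unfolding less_eq_vec_def
  proof
    fix i
    show "lb $ i \<le> u $ i"
      using component_le_norm_cart[of "w - u" i] by (simp add: lb_def abs_le_iff)
  qed
  moreover have "(g ^^ k) lb = lb" for k
    by (induction k) (simp_all add: lb_def add_const assms(1))
  ultimately have bounded: "lb \<le> (g ^^ k) u" for k
    by (metis iterates_mono)
  obtain v where lim: "(\<lambda>k. (g ^^ k) u) \<longlonglongrightarrow> v"
    using vec_decreasing_bounded_convergent[of "\<lambda>k. (g ^^ k) u", OF decreasing bounded] by blast
  have critical: "(g ^^ k) u $ i = u $ i" if "i \<in> critical_nodes g" for i k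
  proof (induction k)
    case (Suc k)
    have "g ((g ^^ k) u) \<le> (g ^^ k) u" using decreasing[of k] by simp
    then show ?case using super_harmonic_fixed_on_critical_nodes[OF _ that] Suc by simp
  qed simp
  have "v $ i = u $ i" if "i \<in> critical_nodes g" for i
    using tendsto_vec_nth[OF lim, of i] critical[OF that] by (simp add: LIMSEQ_const_iff)
  then show ?thesis
    using that lim limit_of_iterates_is_fixed_point[OF continuous lim] by blast
qed

end

theorem theorem3p3:
  fixes g :: "real^'n \<Rightarrow> real^'n" and u :: "real^'n" and C N :: "'n set"
  assumes "convex_map g" and "order_preserving g" and "additively_homogeneous g"
    and "\<exists>w. harmonic g w"
    and C_def: "C = critical_nodes g"
    and N_def: "N = UNIV - C"
    and "super_harmonic g u"
  shows "\<exists>v.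
     ((\<lambda>k. (g ^^ k) u) \<longlonglongrightarrow> v) \<and>
     (\<forall>w. (harmonic g w \<and> (\<forall>i\<in>C. w $ i = u $ i)) \<longleftrightarrow> w = v) \<and>
     (\<forall>w. ((\<forall>i\<in>C. w $ i = u $ i) \<and>
           (\<forall>i\<in>N. g (\<chi> j. if j \<in> N then w $ j else u $ j) $ i = w $ i)) \<longleftrightarrow> w = v) \<and>
     (\<forall>w. (super_harmonic g w \<and> (\<forall>i\<in>C. u $ i \<le> w $ i) \<and>
           (\<forall>z. super_harmonic g z \<and> (\<forall>i\<in>C. u $ i \<le> z $ i) \<longrightarrow> w \<le> z)) \<longleftrightarrow> w = v)"
proof -
  interpret convex_topical g using assms(1-3) by unfold_locales
  obtain v where lim: "(\<lambda>k. (g ^^ k) u) \<longlonglongrightarrow> v" and "g v = v"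
    and v_C: "\<And>i. i \<in> C \<Longrightarrow> v $ i = u $ i"
    using super_harmonic_orbit_converges assms(4,7) C_def
    unfolding harmonic_def super_harmonic_def by metis
  have eq_v: "w = v" if "\<And>i. i \<notin> C \<Longrightarrow> g w $ i = w $ i" and "\<And>i. i \<in> C \<Longrightarrow> w $ i = u $ i" for w
    using eq_harmonic_if_fixed_off_critical[OF \<open>g v = v\<close>] that v_C C_def by simp
  have v_least: "v \<le> z" if "g z \<le> z" and "\<And>i. i \<in> C \<Longrightarrow> u $ i \<le> z $ i" for z
    using harmonic_le_if_super_harmonic_off_critical[OF \<open>g v = v\<close>] that v_C C_def
    by (simp add: less_eq_vec_def)
  have splice: "(\<chi> j. if j \<in> N then w $ j else u $ j) = w" if "\<forall>i\<in>C. w $ i = u $ i" for w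
    using that N_def by (auto simp: vec_eq_iff)
  show ?thesis
    unfolding harmonic_def super_harmonic_def
  proof (intro exI[of _ v] conjI allI iffI)
    show "(\<lambda>k. (g ^^ k) u) \<longlonglongrightarrow> v" by (fact lim)
  qed (use \<open>g v = v\<close> v_C eq_v v_least splice N_def in \<open>force intro: order_antisym\<close>)+
qed

end
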